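(* Let $(T,s)$ be a parking function on a rooted tree $T$ with vertex set $[n]$, and let $e=(u,v)$ be an edge of $T$ (oriented $u\to v$, towards the root). Then $e$ is used by $s$ if and only if $|T_u|<|\{i: s_i\in T_u\}|$. Furthermore, the set of edges used by $s$ is invariant under permutations of the entries of $s$.
   Context: $T$ is a rooted tree on vertex set $[n]$ with edges oriented towards the root; an edge $u\to v$ is written $(u,v)$. For $s\in[n]^n$, drivers $1,\dots,n$ arrive in order; driver $i$ parks at $s_i$ if unoccupied, otherwise follows the directed path towards the root and parks at the first unoccupied vertex, leaving if none exists. $(T,s)$ is a parking function if all drivers park. $T_u$ denotes the set of vertices $w$ having a directed path from $w$ to $u$ (including $u$). An edge $e$ is used by $s$ if some driver, after failing to park at her preferred vertex, crosses $e$ during her search for an unoccupied vertex. *)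

theory Defs
  imports "HOL-Library.Multiset"
begin

(* Edges are (u, par u) for u in {1..n}, u \<noteq> r (oriented towards the root). *)
definition rooted_tree :: "nat \<Rightarrow> nat \<Rightarrow> (nat \<Rightarrow> nat) \<Rightarrow> bool" where
  "rooted_tree n r par \<longleftrightarrow> r \<in> {1..n} \<and> par r = r \<and>
     (\<forall>v\<in>{1..n}. par v \<in> {1..n}) \<and> (\<forall>v\<in>{1..n}. \<exists>k. (par ^^ k) v = r)"

definition tree_edges :: "nat \<Rightarrow> nat \<Rightarrow> (nat \<Rightarrow> nat) \<Rightarrow> (nat \<times> nat) set" where
  "tree_edges n r par = {(u, par u) | u. u \<in> {1..n} \<and> u \<noteq> r}"

definition depth :: "(nat \<Rightarrow> nat) \<Rightarrow> nat \<Rightarrow> nat \<Rightarrow> nat" where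
  "depth par r v = (LEAST k. (par ^^ k) v = r)"

definition subtree :: "nat \<Rightarrow> (nat \<Rightarrow> nat) \<Rightarrow> nat \<Rightarrow> nat set" where
  "subtree n par u = {w \<in> {1..n}. \<exists>k. (par ^^ k) w = u}"

(* a driver preferring v, with occupied set Occ, finds a free vertex on her path to the root *)
definition finds_spot :: "(nat \<Rightarrow> nat) \<Rightarrow> nat \<Rightarrow> nat set \<Rightarrow> nat \<Rightarrow> bool" where
  "finds_spot par r Occ v \<longleftrightarrow> (\<exists>k \<le> depth par r v. (par ^^ k) v \<notin> Occ)"

(* number of steps along the path the driver makes; if no free vertex, she walks to the root and leaves *)
definition stop_index :: "(nat \<Rightarrow> nat) \<Rightarrow> nat \<Rightarrow> nat set \<Rightarrow> nat \<Rightarrow> nat" where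
  "stop_index par r Occ v =
     (if finds_spot par r Occ v then (LEAST k. k \<le> depth par r v \<and> (par ^^ k) v \<notin> Occ)
      else depth par r v)"

definition crossed :: "(nat \<Rightarrow> nat) \<Rightarrow> nat \<Rightarrow> nat set \<Rightarrow> nat \<Rightarrow> (nat \<times> nat) set" where
  "crossed par r Occ v = {((par ^^ j) v, (par ^^ Suc j) v) | j. j < stop_index par r Occ v}"

definition park_update :: "(nat \<Rightarrow> nat) \<Rightarrow> nat \<Rightarrow> nat set \<Rightarrow> nat \<Rightarrow> nat set" where
  "park_update par r Occ v =
     (if finds_spot par r Occ v then insert ((par ^^ stop_index par r Occ v) v) Occ else Occ)"

(* occupied vertices after the first i drivers (driver j+1 prefers s ! j) *)
definition occ_after :: "(nat \<Rightarrow> nat) \<Rightarrow> nat \<Rightarrow> nat list \<Rightarrow> nat \<Rightarrow> nat set" where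
  "occ_after par r s i = foldl (park_update par r) {} (take i s)"

definition parking_function :: "nat \<Rightarrow> nat \<Rightarrow> (nat \<Rightarrow> nat) \<Rightarrow> nat list \<Rightarrow> bool" where
  "parking_function n r par s \<longleftrightarrow> rooted_tree n r par \<and> length s = n \<and> set s \<subseteq> {1..n} \<and>
     (\<forall>i < n. finds_spot par r (occ_after par r s i) (s ! i))"

(* edges used by s: crossed by some driver after failing at her preferred vertex
   (crossing any edge implies she failed at her preferred vertex) *)
definition used_edges :: "(nat \<Rightarrow> nat) \<Rightarrow> nat \<Rightarrow> nat list \<Rightarrow> (nat \<times> nat) set" where
  "used_edges par r s = (\<Union>i < length s. crossed par r (occ_after par r s i) (s ! i))"

end

theory Submission
  imports Defs
begin

(* A driver who finds her preferred vertex v occupied behaves exactly like a driver preferring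
   par v, except that she also crosses the edge (v, par v).  Consequently two consecutive drivers
   can be swapped without changing the occupied set or the set of crossed edges, which gives the
   invariance under permutations of s.
   Fix an edge (u, par u).  A driver preferring a vertex outside T_u neither parks in T_u nor
   crosses (u, par u); a driver preferring a vertex of T_u either parks in T_u or crosses
   (u, par u), never both.  Hence the number of occupied vertices of T_u never exceeds the number
   of drivers so far preferring T_u, and falls short of it exactly once (u, par u) has been used.
   For a parking function all of T_u is occupied at the end. *)

lemma funpow_Suc_apply: "(f ^^ Suc k) x = (f ^^ k) (f x)"
  by (simp add: funpow_swap1)

lemma funpow_fixed_point: "f x = x \<Longrightarrow> (f ^^ k) x = x"
  by (induction k) auto

lemma rooted_tree_par_in: "rooted_tree n r par \<Longrightarrow> v \<in> {1..n} \<Longrightarrow> par v \<in> {1..n}"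
  by (simp add: rooted_tree_def)

lemma rooted_tree_funpow_in: "rooted_tree n r par \<Longrightarrow> v \<in> {1..n} \<Longrightarrow> (par ^^ k) v \<in> {1..n}"
  by (induction k) (auto simp: rooted_tree_def)

lemma funpow_depth:
  assumes "rooted_tree n r par" "v \<in> {1..n}"
  shows "(par ^^ depth par r v) v = r"
  using assms unfolding rooted_tree_def depth_def by (metis (mono_tags) LeastI_ex)

lemma depth_le: "(par ^^ k) v = r \<Longrightarrow> depth par r v \<le> k"
  unfolding depth_def by (rule Least_le)

lemma depth_root: "depth par r r = 0"
  unfolding depth_def by (rule Least_eq_0) simp

lemma depth_par:
  assumes T: "rooted_tree n r par" and v: "v \<in> {1..n}" "v \<noteq> r"
  shows "depth par r v = Suc (depth par r (par v))"
proof (rule antisym)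
  show "depth par r v \<le> Suc (depth par r (par v))"
    using funpow_depth[OF T rooted_tree_par_in[OF T v(1)]]
    by (intro depth_le) (simp add: funpow_Suc_apply del: funpow.simps)
  obtain d where d: "depth par r v = Suc d"
    using funpow_depth[OF T v(1)] v(2) by (cases "depth par r v") auto
  then have "(par ^^ d) (par v) = r"
    using funpow_depth[OF T v(1)] by (simp add: funpow_Suc_apply del: funpow.simps)
  then show "Suc (depth par r (par v)) \<le> depth par r v"
    using d depth_le by fastforce
qed

lemma depth_funpow:
  assumes T: "rooted_tree n r par" and w: "w \<in> {1..n}"
  shows "depth par r ((par ^^ k) w) = depth par r w - k"
proof (induction k)
  case (Suc k)
  show ?case
  proof (cases "(par ^^ k) w = r")
    case True
    then have "depth par r w \<le> k" by (rule depth_le)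
    with True T show ?thesis by (simp add: rooted_tree_def depth_root)
  next
    case False
    with Suc depth_par[OF T rooted_tree_funpow_in[OF T w] False] show ?thesis by simp
  qed
qed simp

lemma rooted_tree_induct [consumes 2, case_names root step]:
  assumes T: "rooted_tree n r par" and v: "v \<in> {1..n}"
    and root: "P r"
    and step: "\<And>v. v \<in> {1..n} \<Longrightarrow> v \<noteq> r \<Longrightarrow> P (par v) \<Longrightarrow> P v"
  shows "P v"
  using v
proof (induction "depth par r v" arbitrary: v rule: less_induct)
  case less
  then show ?case
    using root step depth_par[OF T] rooted_tree_par_in[OF T] by (cases "v = r") auto
qed

lemma stop_index_spot_free:
  assumes "finds_spot par r Occ v"
  shows "(par ^^ stop_index par r Occ v) v \<notin> Occ"
proof -
  from assms obtain j where "j \<le> depth par r v \<and> (par ^^ j) v \<notin> Occ"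
    unfolding finds_spot_def by blast
  then show ?thesis
    using assms LeastI[of "\<lambda>k. k \<le> depth par r v \<and> (par ^^ k) v \<notin> Occ"]
    by (simp add: stop_index_def)
qed

lemma stop_index_free: "v \<notin> Occ \<Longrightarrow> stop_index par r Occ v = 0"
  unfolding stop_index_def finds_spot_def by (auto intro: Least_eq_0)

lemma park_update_free: "v \<notin> Occ \<Longrightarrow> park_update par r Occ v = insert v Occ"
  by (auto simp: park_update_def finds_spot_def stop_index_free)

lemma crossed_free: "v \<notin> Occ \<Longrightarrow> crossed par r Occ v = {}"
  by (simp add: crossed_def stop_index_free)

lemma not_finds_spot_root: "r \<in> Occ \<Longrightarrow> \<not> finds_spot par r Occ r"
  by (simp add: finds_spot_def depth_root)

lemma park_update_root: "r \<in> Occ \<Longrightarrow> park_update par r Occ r = Occ"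
  by (simp add: park_update_def not_finds_spot_root)

lemma crossed_root: "r \<in> Occ \<Longrightarrow> crossed par r Occ r = {}"
  by (simp add: crossed_def stop_index_def not_finds_spot_root depth_root)

lemma stop_condition_Suc:
  assumes "rooted_tree n r par" "v \<in> {1..n}" "v \<noteq> r"
  shows "(Suc k \<le> depth par r v \<and> (par ^^ Suc k) v \<notin> Occ) \<longleftrightarrow>
         (k \<le> depth par r (par v) \<and> (par ^^ k) (par v) \<notin> Occ)"
  using depth_par[OF assms] by (simp add: funpow_Suc_apply del: funpow.simps)

lemma finds_spot_occupied:
  assumes T: "rooted_tree n r par" and v: "v \<in> {1..n}" "v \<in> Occ" "v \<noteq> r"
  shows "finds_spot par r Occ v \<longleftrightarrow> finds_spot par r Occ (par v)"
proof -
  have "finds_spot par r Occ v \<longleftrightarrow> (\<exists>k. Suc k \<le> depth par r v \<and> (par ^^ Suc k) v \<notin> Occ)"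
    unfolding finds_spot_def using v(2) by (metis funpow_0 not0_implies_Suc)
  also have "\<dots> \<longleftrightarrow> finds_spot par r Occ (par v)"
    unfolding finds_spot_def stop_condition_Suc[OF T v(1,3)] by blast
  finally show ?thesis .
qed

lemma stop_index_occupied:
  assumes T: "rooted_tree n r par" and v: "v \<in> {1..n}" "v \<in> Occ" "v \<noteq> r"
  shows "stop_index par r Occ v = Suc (stop_index par r Occ (par v))"
proof (cases "finds_spot par r Occ (par v)")
  case True
  then obtain k where "k \<le> depth par r (par v)" "(par ^^ k) (par v) \<notin> Occ"
    unfolding finds_spot_def by blast
  then have "(LEAST k. k \<le> depth par r v \<and> (par ^^ k) v \<notin> Occ) =
      Suc (LEAST k. k \<le> depth par r (par v) \<and> (par ^^ k) (par v) \<notin> Occ)"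
    using v(2) by (subst Least_Suc[of _ "Suc k"]) (simp_all only: stop_condition_Suc[OF T v(1,3)], auto)
  with True show ?thesis
    using finds_spot_occupied[OF T v] unfolding stop_index_def by simp
next
  case False
  then show ?thesis
    using finds_spot_occupied[OF T v] depth_par[OF T v(1,3)] unfolding stop_index_def by simp
qed

lemma park_update_occupied:
  assumes "rooted_tree n r par" "v \<in> {1..n}" "v \<in> Occ" "v \<noteq> r"
  shows "park_update par r Occ v = park_update par r Occ (par v)"
  using finds_spot_occupied[OF assms] stop_index_occupied[OF assms]
  by (simp add: park_update_def funpow_Suc_apply del: funpow.simps)

lemma Collect_less_Suc_eq_insert_0:
  "{f j |j. j < Suc m} = insert (f 0) {f (Suc j) |j. j < m}"
  by (auto simp: less_Suc_eq_0_disj)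

lemma crossed_occupied:
  assumes "rooted_tree n r par" "v \<in> {1..n}" "v \<in> Occ" "v \<noteq> r"
  shows "crossed par r Occ v = insert (v, par v) (crossed par r Occ (par v))"
  unfolding crossed_def stop_index_occupied[OF assms] Collect_less_Suc_eq_insert_0
  by (simp only: funpow_Suc_apply funpow_0)


definition park_step ::
    "(nat \<Rightarrow> nat) \<Rightarrow> nat \<Rightarrow> nat set \<times> (nat \<times> nat) set \<Rightarrow> nat \<Rightarrow> nat set \<times> (nat \<times> nat) set" where
  "park_step par r st v = (park_update par r (fst st) v, snd st \<union> crossed par r (fst st) v)"

lemma fst_park_step: "fst (park_step par r st v) = park_update par r (fst st) v"
  by (simp add: park_step_def)

lemma snd_park_step: "snd (park_step par r st v) = snd st \<union> crossed par r (fst st) v"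
  by (simp add: park_step_def)

lemma park_step_unblocked:
  "\<not> (v \<in> fst st \<and> v \<noteq> r) \<Longrightarrow> park_step par r st v = (insert v (fst st), snd st)"
  by (cases "v \<in> fst st")
    (auto simp: park_step_def park_update_free crossed_free park_update_root crossed_root insert_absorb)

lemma park_step_occupied:
  assumes "rooted_tree n r par" "v \<in> {1..n}" "v \<in> fst st" "v \<noteq> r"
  shows "park_step par r st v =
    (fst (park_step par r st (par v)), insert (v, par v) (snd (park_step par r st (par v))))"
  using park_update_occupied[OF assms] crossed_occupied[OF assms] by (simp add: park_step_def)

lemma fst_park_step_mono: "fst st \<subseteq> fst (park_step par r st v)"
  by (auto simp: park_step_def park_update_def)

lemma park_step_insert_edge:
  "park_step par r (Occ, insert e E) v =
    (fst (park_step par r (Occ, E) v), insert e (snd (park_step par r (Occ, E) v)))"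
  by (simp add: park_step_def)

lemma park_step_commute_unblocked:
  assumes x: "\<not> (x \<in> fst st \<and> x \<noteq> r)" and y: "\<not> (y \<in> fst st \<and> y \<noteq> r)"
  shows "park_step par r (park_step par r st x) y = park_step par r (park_step par r st y) x"
proof (cases "x = y")
  case False
  with x y show ?thesis by (simp add: park_step_unblocked insert_commute)
qed simp

lemma park_step_commute_occupied:
  assumes T: "rooted_tree n r par" and x: "x \<in> {1..n}" "x \<in> fst st" "x \<noteq> r"
    and IH: "\<And>st. park_step par r (park_step par r st (par x)) y = park_step par r (park_step par r st y) (par x)"
  shows "park_step par r (park_step par r st x) y = park_step par r (park_step par r st y) x"
proof -
  have x': "x \<in> fst (park_step par r st y)"
    using x(2) fst_park_step_mono by blast
  have "park_step par r (park_step par r st x) y =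
      (fst (park_step par r (park_step par r st (par x)) y),
       insert (x, par x) (snd (park_step par r (park_step par r st (par x)) y)))"
    using park_step_occupied[OF T x] by (simp add: park_step_insert_edge)
  also have "\<dots> = park_step par r (park_step par r st y) x"
    using park_step_occupied[OF T x(1) x' x(3)] by (simp add: IH)
  finally show ?thesis .
qed

lemma park_step_commute:
  assumes T: "rooted_tree n r par"
  shows "x \<in> {1..n} \<Longrightarrow> y \<in> {1..n} \<Longrightarrow>
    park_step par r (park_step par r st x) y = park_step par r (park_step par r st y) x"
proof (induction "depth par r x + depth par r y" arbitrary: x y st rule: less_induct)
  case less
  consider "x \<in> fst st \<and> x \<noteq> r" | "y \<in> fst st \<and> y \<noteq> r" | "\<not> (x \<in> fst st \<and> x \<noteq> r)" "\<not> (y \<in> fst st \<and> y \<noteq> r)"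
    by blast
  then show ?case
  proof cases
    case 1
    have px: "par x \<in> {1..n}" using rooted_tree_par_in[OF T less.prems(1)] .
    have "depth par r (par x) + depth par r y < depth par r x + depth par r y"
      using depth_par[OF T less.prems(1)] 1 by simp
    from less.hyps[OF this px less.prems(2)] 1 show ?thesis
      by (intro park_step_commute_occupied[OF T less.prems(1)]) auto
  next
    case 2
    have py: "par y \<in> {1..n}" using rooted_tree_par_in[OF T less.prems(2)] .
    have "depth par r x + depth par r (par y) < depth par r x + depth par r y"
      using depth_par[OF T less.prems(2)] 2 by simp
    from less.hyps[OF this less.prems(1) py] 2 show ?thesis
      by (intro park_step_commute_occupied[OF T less.prems(2), symmetric]) auto
  qed (rule park_step_commute_unblocked)
qed

lemma foldl_park_step:
  "foldl (park_step par r) (Occ, E) xs =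
    (foldl (park_update par r) Occ xs,
     E \<union> (\<Union>i < length xs. crossed par r (foldl (park_update par r) Occ (take i xs)) (xs ! i)))"
proof (induction xs arbitrary: Occ E)
  case (Cons x xs)
  have "(\<Union>i < length (x # xs). crossed par r (foldl (park_update par r) Occ (take i (x # xs))) ((x # xs) ! i)) =
      crossed par r Occ x \<union>
      (\<Union>i < length xs. crossed par r (foldl (park_update par r) (park_update par r Occ x) (take i xs)) (xs ! i))"
    by (simp add: lessThan_Suc_eq_insert_0 image_Suc_lessThan[symmetric] del: image_Suc_lessThan)
  with Cons show ?case by (simp add: park_step_def Un_assoc)
qed simp

lemma occ_after_foldl_park_step: "occ_after par r s i = fst (foldl (park_step par r) ({}, {}) (take i s))"
  by (simp add: occ_after_def foldl_park_step)

lemma used_edges_foldl_park_step: "used_edges par r s = snd (foldl (park_step par r) ({}, {}) s)"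
  by (simp add: used_edges_def occ_after_def foldl_park_step)

lemma used_edges_mset_eq:
  assumes T: "rooted_tree n r par" and s: "set s \<subseteq> {1..n}" and perm: "mset s' = mset s"
  shows "used_edges par r s' = used_edges par r s"
proof -
  have "foldl (park_step par r) ({}, {}) s' = foldl (park_step par r) ({}, {}) s"
    unfolding foldl_conv_fold
  proof (rule fold_permuted_eq[where P = "\<lambda>_. True"])
    fix x y st
    assume "x \<in> set s'" "y \<in> set s'"
    then show "park_step par r (park_step par r st y) x = park_step par r (park_step par r st x) y"
      using park_step_commute[OF T] s mset_eq_setD[OF perm] by (metis subsetD)
  qed (use perm in auto)
  then show ?thesis by (simp add: used_edges_foldl_park_step)
qed

lemma finite_subtree: "finite (subtree n par u)"
  by (simp add: subtree_def)

lemma subtree_subset: "subtree n par u \<subseteq> {1..n}"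
  by (auto simp: subtree_def)

lemma self_in_subtree: "u \<in> {1..n} \<Longrightarrow> u \<in> subtree n par u"
  by (auto simp: subtree_def intro: exI[of _ 0])

lemma root_notin_subtree: "rooted_tree n r par \<Longrightarrow> u \<noteq> r \<Longrightarrow> r \<notin> subtree n par u"
  by (auto simp: subtree_def rooted_tree_def funpow_fixed_point)

lemma in_subtree_if_par_in:
  "v \<in> {1..n} \<Longrightarrow> par v \<in> subtree n par u \<Longrightarrow> v \<in> subtree n par u"
  by (auto simp: subtree_def funpow_Suc_apply simp del: funpow.simps intro: exI[of _ "Suc _"])

lemma par_in_subtree:
  assumes T: "rooted_tree n r par" and v: "v \<in> subtree n par u" "v \<noteq> u"
  shows "par v \<in> subtree n par u"
proof -
  obtain k where k: "(par ^^ k) v = u" and "v \<in> {1..n}" using v(1) by (auto simp: subtree_def)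
  moreover obtain k' where "k = Suc k'" using k v(2) by (cases k) auto
  ultimately show ?thesis
    using rooted_tree_par_in[OF T] by (auto simp: subtree_def funpow_Suc_apply simp del: funpow.simps)
qed

lemma par_notin_subtree:
  assumes T: "rooted_tree n r par" and u: "u \<in> {1..n}" "u \<noteq> r"
  shows "par u \<notin> subtree n par u"
proof
  assume "par u \<in> subtree n par u"
  then obtain k where "(par ^^ Suc k) u = u"
    by (auto simp: subtree_def funpow_Suc_apply simp del: funpow.simps)
  then have "depth par r u = 0"
    using depth_funpow[OF T u(1), of "Suc k"] by simp
  then show False
    using funpow_depth[OF T u(1)] u(2) by simp
qed

lemma drive_outside_subtree:
  assumes T: "rooted_tree n r par" and u: "u \<in> {1..n}" and v: "v \<in> {1..n}" "v \<notin> subtree n par u"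
  shows "park_update par r Occ v \<inter> subtree n par u = Occ \<inter> subtree n par u \<and>
    (u, par u) \<notin> crossed par r Occ v"
  using T v
proof (induction v rule: rooted_tree_induct)
  case root
  then show ?case
    by (cases "r \<in> Occ") (auto simp: park_update_free crossed_free park_update_root crossed_root)
next
  case (step v)
  show ?case
  proof (cases "v \<in> Occ")
    case True
    have "v \<noteq> u" using step self_in_subtree[OF u] by blast
    moreover have "par v \<notin> subtree n par u" using step in_subtree_if_par_in by blast
    ultimately show ?thesis
      using step park_update_occupied[OF T step(1) True step(2)] crossed_occupied[OF T step(1) True step(2)]
      by simp
  qed (use step in \<open>auto simp: park_update_free crossed_free\<close>)
qed

lemma drive_inside_subtree:
  assumes T: "rooted_tree n r par" and u: "u \<in> {1..n}" "u \<noteq> r" and v: "v \<in> subtree n par u"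
  shows "(card (park_update par r Occ v \<inter> subtree n par u) = Suc (card (Occ \<inter> subtree n par u)) \<and>
          (u, par u) \<notin> crossed par r Occ v) \<or>
         (park_update par r Occ v \<inter> subtree n par u = Occ \<inter> subtree n par u \<and>
          (u, par u) \<in> crossed par r Occ v)"
  using T subsetD[OF subtree_subset v] v
proof (induction v rule: rooted_tree_induct)
  case root
  then show ?case using root_notin_subtree[OF T u(2)] by blast
next
  case (step v)
  show ?case
  proof (cases "v \<in> Occ")
    case False
    then have "park_update par r Occ v \<inter> subtree n par u = insert v (Occ \<inter> subtree n par u)"
      using step(4) by (auto simp: park_update_free)
    with False show ?thesis
      by (simp add: crossed_free finite_subtree)
  next
    case True
    note occupied = park_update_occupied[OF T step(1) True step(2)] crossed_occupied[OF T step(1) True step(2)]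
    show ?thesis
    proof (cases "v = u")
      case True
      then show ?thesis
        using occupied drive_outside_subtree[OF T u(1) rooted_tree_par_in[OF T u(1)] par_notin_subtree[OF T u]]
        by simp
    next
      case False
      then show ?thesis
        using occupied step(3) par_in_subtree[OF T step(4) False] by auto
    qed
  qed
qed

lemma subtree_occupancy:
  assumes T: "rooted_tree n r par" and u: "u \<in> {1..n}" "u \<noteq> r" and xs: "set xs \<subseteq> {1..n}"
  defines "st \<equiv> foldl (park_step par r) ({}, {}) xs"
    and "N \<equiv> length (filter (\<lambda>v. v \<in> subtree n par u) xs)"
  shows "card (fst st \<inter> subtree n par u) \<le> N \<and>
    (card (fst st \<inter> subtree n par u) < N \<longleftrightarrow> (u, par u) \<in> snd st)"
  unfolding st_def N_def using xs
proof (induction xs rule: rev_induct)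
  case (snoc v xs)
  define Occ where "Occ = fst (foldl (park_step par r) ({}, {}) xs)"
  have v: "v \<in> {1..n}" using snoc.prems by simp
  show ?case
  proof (cases "v \<in> subtree n par u")
    case True
    with snoc drive_inside_subtree[OF T u True, of Occ] show ?thesis
      by (auto simp: Occ_def fst_park_step snd_park_step)
  next
    case False
    with snoc drive_outside_subtree[OF T u(1) v False, of Occ] show ?thesis
      by (auto simp: Occ_def fst_park_step snd_park_step)
  qed
qed simp

lemma parking_function_occ_after:
  assumes P: "parking_function n r par s" and i: "i \<le> n"
  shows "occ_after par r s i \<subseteq> {1..n} \<and> card (occ_after par r s i) = i"
  using i
proof (induction i)
  case 0
  then show ?case by (simp add: occ_after_def)
next
  case (Suc i)
  have T: "rooted_tree n r par" and len: "length s = n" and s: "set s \<subseteq> {1..n}"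
    using P by (auto simp: parking_function_def)
  define Occ where "Occ = occ_after par r s i"
  define v where "v = s ! i"
  have v_in: "v \<in> {1..n}" using s len Suc.prems unfolding v_def by (metis Suc_le_lessD nth_mem subsetD)
  have fs: "finds_spot par r Occ v"
    using P Suc.prems by (simp add: parking_function_def Occ_def v_def)
  define k where "k = stop_index par r Occ v"
  have "occ_after par r s (Suc i) = insert ((par ^^ k) v) Occ"
    using Suc.prems len fs
    by (simp add: occ_after_def take_Suc_conv_app_nth Occ_def v_def park_update_def k_def)
  moreover have "Occ \<subseteq> {1..n}" "card Occ = i" using Suc by (auto simp: Occ_def)
  ultimately show ?case
    using stop_index_spot_free[OF fs, folded k_def] finite_subset[of Occ "{1..n}"]
      rooted_tree_funpow_in[OF T v_in, of k]
    by simp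
qed

lemma parking_function_occupies_all:
  assumes P: "parking_function n r par s"
  shows "fst (foldl (park_step par r) ({}, {}) s) = {1..n}"
proof -
  have len: "length s = n" using P by (simp add: parking_function_def)
  from parking_function_occ_after[OF P, of n] have "occ_after par r s n = {1..n}"
    by (simp add: card_subset_eq)
  with len show ?thesis by (simp add: occ_after_foldl_park_step)
qed

theorem proposition2p4:
  fixes n r :: nat and par :: "nat \<Rightarrow> nat" and s :: "nat list"
  assumes "parking_function n r par s"
  shows "(\<forall>u v. (u, v) \<in> tree_edges n r par \<longrightarrow>
            ((u, v) \<in> used_edges par r s \<longleftrightarrow>
             card (subtree n par u) < card {i. i < n \<and> s ! i \<in> subtree n par u}))
       \<and> (\<forall>s'. mset s' = mset s \<longrightarrow> used_edges par r s' = used_edges par r s)"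
proof (intro conjI allI impI)
  have T: "rooted_tree n r par" and len: "length s = n" and s: "set s \<subseteq> {1..n}"
    using assms by (auto simp: parking_function_def)
  fix u v
  assume "(u, v) \<in> tree_edges n r par"
  then have u: "u \<in> {1..n}" "u \<noteq> r" and v: "v = par u"
    by (auto simp: tree_edges_def)
  have "fst (foldl (park_step par r) ({}, {}) s) \<inter> subtree n par u = subtree n par u"
    using parking_function_occupies_all[OF assms] subtree_subset by blast
  moreover have "length (filter (\<lambda>w. w \<in> subtree n par u) s) = card {i. i < n \<and> s ! i \<in> subtree n par u}"
    using len by (simp add: length_filter_conv_card)
  ultimately show "(u, v) \<in> used_edges par r s \<longleftrightarrow>
      card (subtree n par u) < card {i. i < n \<and> s ! i \<in> subtree n par u}"
    using subtree_occupancy[OF T u s] by (simp add: used_edges_foldl_park_step v)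
next
  fix s'
  assume "mset s' = mset s"
  with assms show "used_edges par r s' = used_edges par r s"
    by (intro used_edges_mset_eq[of n r par]) (auto simp: parking_function_def)
qed

end
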